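(* Let $d\ge1$, $\emptyset\ne H\subset\mathbb{R}^d$, $R>0$, and let $x,y\in\mathbb{R}^d$ with $d(x,H)\ge R$ and $d(y,H)\ge R$. Let $f(t):=d(T_tx,T_ty)$ for $t\ge0$. Then for every $0\le t<R$, $f$ is differentiable at $t$ (one-sidedly at $t=0$) and $$-\dot f(t)\le\frac{f(t)}{R-t}.$$
   Context: $d(\cdot,\cdot)$ is Euclidean distance and $d(x,H)=\inf_{z\in H}|x-z|$. Let $\bar H$ be the closure of $H$; for each $x$ let $\pi(x)\in\bar H$ be a point with $|x-\pi(x)|=d(x,H)$ (any one if several). For $t\ge0$, $T_t x:=x+t\frac{\pi(x)-x}{|\pi(x)-x|}$ if $d(x,H)>t$ and $T_t x:=\pi(x)$ if $d(x,H)\le t$. *)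

theory Defs
  imports "HOL-Analysis.Analysis"
begin

definition nearest_selection :: "'a::euclidean_space set \<Rightarrow> ('a \<Rightarrow> 'a) \<Rightarrow> bool" where
  "nearest_selection H proj \<longleftrightarrow>
     (\<forall>x. proj x \<in> closure H \<and> dist x (proj x) = infdist x H)"

definition flowT :: "'a::euclidean_space set \<Rightarrow> ('a \<Rightarrow> 'a) \<Rightarrow> real \<Rightarrow> 'a \<Rightarrow> 'a" where
  "flowT H proj t x =
     (if infdist x H > t then x + (t / norm (proj x - x)) *\<^sub>R (proj x - x) else proj x)"

end

theory Submission
  imports Defs
begin

text \<open>Before time \<open>R\<close> both points move with unit speed along the straight segments towards
  their nearest points \<open>p = x + d\<^sub>x u\<close> and \<open>q = y + d\<^sub>y v\<close>, so \<open>f(s) = |w(s)|\<close> with the affine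
  \<open>w(s) = x - y + s(u - v)\<close>. At time \<open>t\<close> the moved point \<open>x + tu\<close> is still at distance at least
  \<open>d\<^sub>x - t \<ge> R - t\<close> from \<open>q\<close>, and symmetrically for \<open>y + tv\<close> and \<open>p\<close>. Expanding these two
  inequalities bounds \<open>w \<bullet> (v - u)\<close> by \<open>|w|\<^sup>2/(R - t)\<close>, which is the claim since
  \<open>f' = (w \<bullet> (u - v))/|w|\<close>. The derivative exists because the points never collide: a collision
  would turn a triangle inequality into an equality, forcing \<open>u = v\<close> and \<open>x = y\<close>.\<close>

lemma infdist_le_dist_closure:
  fixes H :: "'a::metric_space set"
  assumes "H \<noteq> {}" "q \<in> closure H"
  shows "infdist z H \<le> dist z q"
proof -
  have "infdist q H = 0" using assms in_closure_iff_infdist_zero by blast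
  then show ?thesis using infdist_triangle[of z H q] by simp
qed

lemma inner_direction_diff_le:
  fixes a b u v :: "'a::real_inner"
  assumes u: "norm u = 1" and v: "norm v = 1"
    and c: "0 < c" "c \<le> ra" "c \<le> rb"
    and sep_a: "ra \<le> dist a (b + rb *\<^sub>R v)" and sep_b: "rb \<le> dist b (a + ra *\<^sub>R u)"
  shows "(a - b) \<bullet> (v - u) \<le> (norm (a - b))\<^sup>2 / c"
proof -
  define w where "w = a - b"
  define N where "N = (norm w)\<^sup>2"
  have pos: "0 < ra" "0 < rb" using c by auto
  have uu: "u \<bullet> u = 1" and vv: "v \<bullet> v = 1" using u v by (simp_all add: norm_eq_1)
  have "ra\<^sup>2 \<le> (norm (w - rb *\<^sub>R v))\<^sup>2"
    using sep_a pos by (intro power_mono) (auto simp: w_def dist_norm algebra_simps)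
  also have "\<dots> = N - 2 * rb * (w \<bullet> v) + rb\<^sup>2"
    using vv unfolding N_def power2_norm_eq_inner
    by (simp add: inner_diff_left inner_diff_right inner_commute power2_eq_square algebra_simps)
  finally have bound_v: "w \<bullet> v \<le> (N + rb\<^sup>2 - ra\<^sup>2) / (2 * rb)"
    using pos by (simp add: field_simps)
  have "rb\<^sup>2 \<le> (norm (w + ra *\<^sub>R u))\<^sup>2"
    using sep_b pos by (intro power_mono) (auto simp: w_def dist_norm norm_minus_commute algebra_simps)
  also have "\<dots> = N + 2 * ra * (w \<bullet> u) + ra\<^sup>2"
    using uu unfolding N_def power2_norm_eq_inner
    by (simp add: inner_add_left inner_add_right inner_commute power2_eq_square algebra_simps)
  finally have bound_u: "- (w \<bullet> u) \<le> (N + ra\<^sup>2 - rb\<^sup>2) / (2 * ra)"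
    using pos by (simp add: field_simps)
  from bound_u bound_v have "w \<bullet> (v - u) \<le> (N + rb\<^sup>2 - ra\<^sup>2) / (2 * rb) + (N + ra\<^sup>2 - rb\<^sup>2) / (2 * ra)"
    by (simp add: inner_diff_right)
  also have "\<dots> = N / (2 * rb) + N / (2 * ra) - (ra - rb)\<^sup>2 * (ra + rb) / (2 * ra * rb)"
    using pos by (simp add: field_simps power2_eq_square)
  also have "\<dots> \<le> N / (2 * rb) + N / (2 * ra)"
    using pos by simp
  also have "N / (2 * rb) \<le> N / (2 * c)" using c by (intro divide_left_mono) (auto simp: N_def)
  also have "N / (2 * ra) \<le> N / (2 * c)" using c by (intro divide_left_mono) (auto simp: N_def)
  finally show ?thesis by (simp add: w_def N_def)
qed

lemma inner_rays_diff_le: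
  fixes x y u v :: "'a::real_inner"
  assumes u: "norm u = 1" and v: "norm v = 1" and t: "0 \<le> t"
    and c: "0 < c" "t + c \<le> dx" "t + c \<le> dy"
    and sep_x: "dx \<le> dist x (y + dy *\<^sub>R v)" and sep_y: "dy \<le> dist y (x + dx *\<^sub>R u)"
  shows "((x - y) + t *\<^sub>R (u - v)) \<bullet> (v - u) \<le> (norm ((x - y) + t *\<^sub>R (u - v)))\<^sup>2 / c"
proof -
  have "dx - t \<le> dist (x + t *\<^sub>R u) (y + t *\<^sub>R v + (dy - t) *\<^sub>R v)"
    using sep_x dist_triangle[of x "y + dy *\<^sub>R v" "x + t *\<^sub>R u"] u t
    by (simp add: dist_norm algebra_simps)
  moreover have "dy - t \<le> dist (y + t *\<^sub>R v) (x + t *\<^sub>R u + (dx - t) *\<^sub>R u)"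
    using sep_y dist_triangle[of y "x + dx *\<^sub>R u" "y + t *\<^sub>R v"] v t
    by (simp add: dist_norm algebra_simps)
  ultimately have "(x + t *\<^sub>R u - (y + t *\<^sub>R v)) \<bullet> (v - u)
      \<le> (norm (x + t *\<^sub>R u - (y + t *\<^sub>R v)))\<^sup>2 / c"
    using c by (intro inner_direction_diff_le[OF u v]) auto
  then show ?thesis by (simp add: algebra_simps)
qed

lemma moved_points_distinct:
  fixes x y u v :: "'a::real_inner"
  assumes "x \<noteq> y" and u: "norm u = 1" and v: "norm v = 1"
    and t: "0 \<le> t" "t < dx" "t < dy"
    and sep_x: "dx \<le> dist x (y + dy *\<^sub>R v)" and sep_y: "dy \<le> dist y (x + dx *\<^sub>R u)"
  shows "x + t *\<^sub>R u \<noteq> y + t *\<^sub>R v"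
proof
  assume meet: "x + t *\<^sub>R u = y + t *\<^sub>R v"
  then have x: "x = y + t *\<^sub>R v - t *\<^sub>R u" by (metis add_diff_cancel_right')
  have "dist x (y + dy *\<^sub>R v) = norm (- (t *\<^sub>R u + (dy - t) *\<^sub>R v))"
    unfolding dist_norm x by (simp add: algebra_simps)
  also have "\<dots> = norm (t *\<^sub>R u + (dy - t) *\<^sub>R v)" by (rule norm_minus_cancel)
  finally have dist_x: "dist x (y + dy *\<^sub>R v) = norm (t *\<^sub>R u + (dy - t) *\<^sub>R v)" .
  have "norm (t *\<^sub>R u + (dy - t) *\<^sub>R v) \<le> t + (dy - t)"
    using norm_triangle_ineq[of "t *\<^sub>R u" "(dy - t) *\<^sub>R v"] u v t by simp
  with dist_x sep_x have "dx \<le> dy" by simp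
  have "dist y (x + dx *\<^sub>R u) = norm (- ((dx - t) *\<^sub>R u + t *\<^sub>R v))"
    unfolding dist_norm x by (simp add: algebra_simps)
  also have "\<dots> = norm ((dx - t) *\<^sub>R u + t *\<^sub>R v)" by (rule norm_minus_cancel)
  also have "\<dots> \<le> (dx - t) + t"
    using norm_triangle_ineq[of "(dx - t) *\<^sub>R u" "t *\<^sub>R v"] u v t by simp
  finally have "dy \<le> dx" using sep_y by simp
  show False
  proof (cases "t = 0")
    case True
    then show False using meet \<open>x \<noteq> y\<close> by simp
  next
    case False
    \<comment> \<open>with \<open>d\<^sub>x = d\<^sub>y\<close> the first triangle inequality is an equality\<close>
    have "norm (t *\<^sub>R u + (dy - t) *\<^sub>R v) = norm (t *\<^sub>R u) + norm ((dy - t) *\<^sub>R v)"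
      using \<open>dx \<le> dy\<close> \<open>dy \<le> dx\<close> sep_x dist_x
        norm_triangle_ineq[of "t *\<^sub>R u" "(dy - t) *\<^sub>R v"] u v t by simp
    then have "norm (t *\<^sub>R u) *\<^sub>R ((dy - t) *\<^sub>R v) = norm ((dy - t) *\<^sub>R v) *\<^sub>R (t *\<^sub>R u)"
      by (simp only: norm_triangle_eq)
    then have "(t * (dy - t)) *\<^sub>R v = (t * (dy - t)) *\<^sub>R u"
      using u v t by (simp add: mult.commute)
    then have "u = v" using False t by simp
    then show False using meet \<open>x \<noteq> y\<close> by simp
  qed
qed

lemma has_real_derivative_norm_affine:
  fixes a e :: "'a::real_inner"
  assumes "a + t *\<^sub>R e \<noteq> 0"
  shows "((\<lambda>s. norm (a + s *\<^sub>R e)) has_real_derivative sgn (a + t *\<^sub>R e) \<bullet> e) (at t)"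
proof -
  have "((\<lambda>s. a + s *\<^sub>R e) has_derivative (\<lambda>h. h *\<^sub>R e)) (at t)"
    by (auto intro!: derivative_eq_intros)
  from has_derivative_compose[OF this has_derivative_norm[OF assms]] show ?thesis
    unfolding has_field_derivative_def by (simp add: o_def inner_commute mult_commute_abs)
qed

text \<open>In the application \<open>x + d\<^sub>x u\<close> and \<open>y + d\<^sub>y v\<close> are the selected nearest points, and
  \<open>sep_x\<close>, \<open>sep_y\<close> hold because each of them lies in the closure of \<open>H\<close>.\<close>

lemma rays_distance_derivative_bound:
  fixes x y u v :: "'a::real_inner"
  assumes "x \<noteq> y" and u: "norm u = 1" and v: "norm v = 1"
    and t: "0 \<le> t" "t < R" "R \<le> dx" "R \<le> dy"
    and sep_x: "dx \<le> dist x (y + dy *\<^sub>R v)" and sep_y: "dy \<le> dist y (x + dx *\<^sub>R u)"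
  shows "\<exists>D. ((\<lambda>s. norm ((x - y) + s *\<^sub>R (u - v))) has_real_derivative D) (at t)
           \<and> - D \<le> norm ((x - y) + t *\<^sub>R (u - v)) / (R - t)"
proof
  define w where "w = (x - y) + t *\<^sub>R (u - v)"
  have "x + t *\<^sub>R u \<noteq> y + t *\<^sub>R v"
    using t by (intro moved_points_distinct[OF \<open>x \<noteq> y\<close> u v _ _ _ sep_x sep_y]) auto
  then have "w \<noteq> 0" by (simp add: w_def algebra_simps)
  have bound: "w \<bullet> (v - u) \<le> (norm w)\<^sup>2 / (R - t)"
    unfolding w_def using t by (intro inner_rays_diff_le[OF u v _ _ _ _ sep_x sep_y]) auto
  have "- (sgn w \<bullet> (u - v)) = w \<bullet> (v - u) / norm w"
    by (simp add: sgn_div_norm inner_diff_right divide_inverse algebra_simps)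
  also have "\<dots> \<le> (norm w)\<^sup>2 / (R - t) / norm w"
    using bound by (rule divide_right_mono) simp
  also have "\<dots> = norm w / (R - t)" using \<open>w \<noteq> 0\<close> by (simp add: power2_eq_square)
  finally show "((\<lambda>s. norm ((x - y) + s *\<^sub>R (u - v))) has_real_derivative sgn w \<bullet> (u - v)) (at t)
      \<and> - (sgn w \<bullet> (u - v)) \<le> norm ((x - y) + t *\<^sub>R (u - v)) / (R - t)"
    using has_real_derivative_norm_affine \<open>w \<noteq> 0\<close> by (simp add: w_def)
qed

lemma norm_nearest_selection_diff:
  assumes "nearest_selection H proj"
  shows "norm (proj x - x) = infdist x H"
  using assms unfolding nearest_selection_def by (metis dist_norm norm_minus_commute)

lemma nearest_selection_eq:
  assumes "nearest_selection H proj" "0 < infdist x H"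
  shows "proj x = x + infdist x H *\<^sub>R sgn (proj x - x)"
    and "norm (sgn (proj x - x)) = 1"
  using assms norm_nearest_selection_diff[OF assms(1), of x] by (auto simp: sgn_div_norm norm_sgn)

lemma flowT_before_arrival:
  assumes "nearest_selection H proj" "s < infdist x H"
  shows "flowT H proj s x = x + s *\<^sub>R sgn (proj x - x)"
  using assms norm_nearest_selection_diff[OF assms(1), of x]
  by (simp add: flowT_def sgn_div_norm divide_inverse)

lemma dist_flowT_before_arrival:
  assumes "nearest_selection H proj" "s < infdist x H" "s < infdist y H"
  shows "dist (flowT H proj s x) (flowT H proj s y)
           = norm ((x - y) + s *\<^sub>R (sgn (proj x - x) - sgn (proj y - y)))"
  using assms by (simp add: flowT_before_arrival dist_norm algebra_simps)

lemma infdist_le_dist_nearest: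
  assumes "H \<noteq> {}" "nearest_selection H proj"
  shows "infdist x H \<le> dist x (proj y)"
  using assms infdist_le_dist_closure unfolding nearest_selection_def by blast

theorem corollary1:
  fixes H :: "'a::euclidean_space set" and proj :: "'a \<Rightarrow> 'a"
    and x y :: 'a and R t :: real
  assumes "H \<noteq> {}"
    and "nearest_selection H proj"
    and "R > 0"
    and "infdist x H \<ge> R" and "infdist y H \<ge> R"
    and "0 \<le> t" and "t < R"
  shows "\<exists>D. ((\<lambda>s. dist (flowT H proj s x) (flowT H proj s y)) has_real_derivative D)
               (at t within {0..})
          \<and> - D \<le> dist (flowT H proj t x) (flowT H proj t y) / (R - t)"
proof (cases "x = y")
  case True
  then show ?thesis using assms by (intro exI[of _ 0]) auto
next
  case False
  define u v where "u = sgn (proj x - x)" and "v = sgn (proj y - y)"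
  have pos: "0 < infdist x H" "0 < infdist y H" using assms by auto
  note px = nearest_selection_eq[OF assms(2) pos(1), folded u_def]
  note py = nearest_selection_eq[OF assms(2) pos(2), folded v_def]
  have "infdist x H \<le> dist x (y + infdist y H *\<^sub>R v)" "infdist y H \<le> dist y (x + infdist x H *\<^sub>R u)"
    using infdist_le_dist_nearest[OF assms(1,2)] unfolding px(1)[symmetric] py(1)[symmetric] by auto
  with assms obtain D where D: "((\<lambda>s. norm ((x - y) + s *\<^sub>R (u - v))) has_real_derivative D) (at t)"
      "- D \<le> norm ((x - y) + t *\<^sub>R (u - v)) / (R - t)"
    by (metis rays_distance_derivative_bound[OF False px(2) py(2)])
  have flow: "dist (flowT H proj s x) (flowT H proj s y) = norm ((x - y) + s *\<^sub>R (u - v))"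
    if "s < R" for s
    using dist_flowT_before_arrival[OF assms(2), of s x y] that assms by (simp add: u_def v_def)
  have "((\<lambda>s. dist (flowT H proj s x) (flowT H proj s y)) has_real_derivative D) (at t within {0..})"
    using assms
    by (intro has_field_derivative_transform_within[OF has_field_derivative_at_within[OF D(1)],
          of "R - t"]) (auto simp: flow dist_real_def)
  then show ?thesis using D(2) flow assms by auto
qed

end
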